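(* In the projected continuous MRA model with any $L\ge1$, for all $\theta,\theta_*\in\mathbb{R}^d$, \[\tilde s_1(\theta)=\big(\theta^{(0)}-\theta_*^{(0)}\big)^2,\qquad \tilde s_2(\theta)=\big((\theta^{(0)})^2-(\theta_*^{(0)})^2\big)^2+\tfrac14\sum_{l=1}^L\big(r_l(\theta)^2-r_l(\theta_* )^2\big)^2,\] \[\tilde s_3(\theta)=\tfrac23\big((\theta^{(0)})^3-(\theta_*^{(0)})^3\big)^2+\tfrac12\sum_{l=1}^L\big(\theta^{(0)}r_l(\theta)^2-\theta_*^{(0)}r_l(\theta_* )^2\big)^2+\tfrac1{16}\sum_{\substack{l,l',l''=1\\l=l'+l''}}^L\Big(r_{l,l',l''}(\theta)^2+r_{l,l',l''}(\theta_* )^2-2r_{l,l',l''}(\theta)r_{l,l',l''}(\theta_* )\cos\big(\lambda_{l,l',l''}(\theta_* )-\lambda_{l,l',l''}(\theta)\big)\] \[\qquad+r_{l,l',l''}(\theta)^2\cos\big(2\lambda_{l,l',l''}(\theta)\big)+r_{l,l',l''}(\theta_* )^2\cos\big(2\lambda_{l,l',l''}(\theta_* )\big)-2r_{l,l',l''}(\theta)r_{l,l',l''}(\theta_* )\cos\big(\lambda_{l,l',l''}(\theta_* )+\lambda_{l,l',l''}(\theta)\big)\Big).\]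
   Context: Let $\theta=(\theta^{(0)},\theta_1^{(1)},\theta_2^{(1)},\dots,\theta_1^{(L)},\theta_2^{(L)})\in\mathbb{R}^d$, $d=2L+1$; $\mathsf{G}\subset\mathsf{O}(d)$ is the group of $g=\operatorname{diag}(1,R_1(\mathfrak g),\dots,R_L(\mathfrak g))$, $\mathfrak g\in[0,1)$, $R_l(\mathfrak g)=\begin{pmatrix}\cos2\pi l\mathfrak g&\sin2\pi l\mathfrak g\\-\sin2\pi l\mathfrak g&\cos2\pi l\mathfrak g\end{pmatrix}$, with Haar probability measure $\Lambda$; $\Pi(\theta)=\sqrt2(\theta^{(0)},\theta_1^{(1)},\dots,\theta_1^{(L)})\in\mathbb{R}^{L+1}$. $\widetilde T_k(\theta)=\int(\Pi g\theta)^{\otimes k}d\Lambda(g)$ and $\tilde s_k(\theta)=\frac1{2(k!)}\|\widetilde T_k(\theta)-\widetilde T_k(\theta_* )\|^2_{\mathrm{HS}}$ (Euclidean norm of tensor entries). For $l\ge1$, $\theta_1^{(l)}+i\theta_2^{(l)}=r_l(\theta)e^{i\lambda_l(\theta)}$; $r_{l,l',l''}=r_lr_{l'}r_{l''}$, $\lambda_{l,l',l''}=\lambda_l-\lambda_{l'}-\lambda_{l''}$. *)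

theory Defs
  imports "HOL-Analysis.Analysis" "HOL-Library.FuncSet"
begin

text \<open>Encoding of theta in R^d, d = 2L+1, as a function nat => real:
  theta 0 = theta^(0), theta (2l-1) = theta_1^(l), theta (2l) = theta_2^(l), 1 <= l <= L.
  Entries at indices > 2L are irrelevant.\<close>

definition th0 :: "(nat \<Rightarrow> real) \<Rightarrow> real" where
  "th0 \<theta> = \<theta> 0"

definition th1 :: "(nat \<Rightarrow> real) \<Rightarrow> nat \<Rightarrow> real" where
  "th1 \<theta> l = \<theta> (2*l - 1)"

definition th2 :: "(nat \<Rightarrow> real) \<Rightarrow> nat \<Rightarrow> real" where
  "th2 \<theta> l = \<theta> (2*l)"

text \<open>The group element g(t), t in [0,1), acting on theta, then projected by Pi:
  component i of Pi (g(t) theta) in R^{L+1}, i = 0..L.\<close>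
definition proj_rot :: "(nat \<Rightarrow> real) \<Rightarrow> real \<Rightarrow> nat \<Rightarrow> real" where
  "proj_rot \<theta> t i =
     (if i = 0 then sqrt 2 * th0 \<theta>
      else sqrt 2 * (cos (2*pi*real i*t) * th1 \<theta> i + sin (2*pi*real i*t) * th2 \<theta> i))"

text \<open>Entry of the averaged moment tensor: the Haar probability measure on G is the
  uniform (Lebesgue) measure on the parameter interval [0,1).\<close>
definition Tt :: "nat \<Rightarrow> (nat \<Rightarrow> real) \<Rightarrow> (nat \<Rightarrow> nat) \<Rightarrow> real" where
  "Tt k \<theta> idx = integral {0..<1} (\<lambda>t. \<Prod>j<k. proj_rot \<theta> t (idx j))"

definition st :: "nat \<Rightarrow> nat \<Rightarrow> (nat \<Rightarrow> real) \<Rightarrow> (nat \<Rightarrow> real) \<Rightarrow> real" where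
  "st L k \<theta> \<theta>s = 1 / (2 * fact k) *
     (\<Sum>idx \<in> {..<k} \<rightarrow>\<^sub>E {0..L}. (Tt k \<theta> idx - Tt k \<theta>s idx)\<^sup>2)"

definition rr :: "(nat \<Rightarrow> real) \<Rightarrow> nat \<Rightarrow> real" where
  "rr \<theta> l = cmod (Complex (th1 \<theta> l) (th2 \<theta> l))"

definition lam :: "(nat \<Rightarrow> real) \<Rightarrow> nat \<Rightarrow> real" where
  "lam \<theta> l = Arg (Complex (th1 \<theta> l) (th2 \<theta> l))"

definition rrr :: "(nat \<Rightarrow> real) \<Rightarrow> nat \<Rightarrow> nat \<Rightarrow> nat \<Rightarrow> real" where
  "rrr \<theta> l l' l'' = rr \<theta> l * rr \<theta> l' * rr \<theta> l''"

definition lll :: "(nat \<Rightarrow> real) \<Rightarrow> nat \<Rightarrow> nat \<Rightarrow> nat \<Rightarrow> real" where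
  "lll \<theta> l l' l'' = lam \<theta> l - lam \<theta> l' - lam \<theta> l''"

end

theory Submission
  imports Defs
begin

text \<open>In the complex coordinates z_0 = theta^(0), z_l = theta_1^(l) + i theta_2^(l) = r_l e^(i lambda_l),
  the i-th entry of Pi g theta is sqrt 2 Re (conj z_i e^(2 pi i i g)). By the product-to-sum formulas a
  product of k such entries is a sum of terms Re (c e^(2 pi i m g)), where m is a signed sum of the
  indices, and averaging over g keeps exactly the resonant terms with m = 0. So the second moment tensor
  is diagonal with entries 2 (theta^(0))^2 and r_l^2, and the third one lives on the index triples
  (0,0,0), the permutations of (0,l,l), and the triples in which one index is the sum of the other two;
  there its entry is Re (z_l conj z_l' conj z_l'') = r_{l,l',l''} cos lambda_{l,l',l''}. Summing squared
  differences over all index tuples gives the three formulas, the last sum being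
  2 (r cos lambda - r_* cos lambda_* )^2 expanded with the double-angle and addition formulas.\<close>

lemma has_integral_Ico_iff_Icc:
  fixes f :: "real \<Rightarrow> 'a::banach"
  shows "(f has_integral I) {a..<b} \<longleftrightarrow> (f has_integral I) {a..b}"
  by (rule has_integral_spike_set_eq) (auto intro: negligible_subset[of "{b}"])

lemma has_integral_cos_sin_period:
  fixes x a b :: real
  assumes "x \<in> \<int>"
  shows "((\<lambda>t. a * cos (2*pi*x*t) + b * sin (2*pi*x*t)) has_integral (if x = 0 then a else 0)) {0..<1}"
proof (cases "x = 0")
  case True
  then show ?thesis
    using has_integral_const_real[of a 0 1] by (simp add: has_integral_Ico_iff_Icc)
next
  case False
  define w where "w = 2*pi*x"
  have "w \<noteq> 0" using False by (simp add: w_def)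
  define F where "F t = (a * sin (w*t) - b * cos (w*t)) / w" for t
  have F': "(F has_real_derivative (a * cos (w*t) + b * sin (w*t))) (at t)" for t
    unfolding F_def using \<open>w \<noteq> 0\<close> by (auto intro!: derivative_eq_intros simp: field_simps)
  obtain m :: int where "x = of_int m" using assms Ints_cases by blast
  then have "F 1 = F 0"
    by (simp add: F_def w_def)
  moreover have "((\<lambda>t. a * cos (w*t) + b * sin (w*t)) has_integral (F 1 - F 0)) {0..1}"
    by (intro fundamental_theorem_of_calculus)
       (auto intro: F'[THEN DERIV_subset] simp: has_real_derivative_iff_has_vector_derivative[symmetric])
  ultimately show ?thesis
    using False by (simp add: has_integral_Ico_iff_Icc w_def)
qed

lemma has_integral_Re_cis_period:
  assumes "x \<in> \<int>"
  shows "((\<lambda>t. Re (C * cis (x * (2*pi*t)))) has_integral (if x = 0 then Re C else 0)) {0..<1}"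
  using has_integral_cos_sin_period[OF assms, of "Re C" "- Im C"] by (simp add: cis.code mult_ac)

lemma Re_mult_Re_cis:
  "Re (A * cis a) * Re (B * cis b) = (Re (A * B * cis (a + b)) + Re (A * cnj B * cis (a - b))) / 2"
proof -
  have "Re z * Re w = (Re (z * w) + Re (z * cnj w)) / 2" for z w
    by (simp add: algebra_simps)
  from this[of "A * cis a" "B * cis b"] show ?thesis
    by (simp add: cis_mult cis_cnj algebra_simps)
qed

lemma Re_mult_Re_mult_Re_cis:
  "Re (A * cis a) * Re (B * cis b) * Re (C * cis c) =
     (Re (A * B * C * cis (a + b + c)) + Re (A * B * cnj C * cis (a + b - c))
      + Re (A * cnj B * C * cis (a - b + c)) + Re (cnj A * B * C * cis (b + c - a))) / 4"
proof -
  have "Re z * Re w * Re u =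
      (Re (z * w * u) + Re (z * w * cnj u) + Re (z * cnj w * u) + Re (cnj z * w * u)) / 4" for z w u
    by (simp add: algebra_simps)
  from this[of "A * cis a" "B * cis b" "C * cis c"] show ?thesis
    by (simp add: cis_mult cis_cnj algebra_simps)
qed

definition coord :: "(nat \<Rightarrow> real) \<Rightarrow> nat \<Rightarrow> complex" where
  "coord \<theta> i = (if i = 0 then complex_of_real (th0 \<theta>) else Complex (th1 \<theta> i) (th2 \<theta> i))"

lemma proj_rot_eq_Re_cis: "proj_rot \<theta> t i = sqrt 2 * Re (cnj (coord \<theta> i) * cis (real i * (2*pi*t)))"
  by (simp add: proj_rot_def coord_def cis.code mult_ac)

text \<open>The resonant terms of the product-to-sum expansion, i.e. those whose frequency vanishes.\<close>

definition moment2 :: "(nat \<Rightarrow> real) \<Rightarrow> nat \<Rightarrow> nat \<Rightarrow> real" where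
  "moment2 \<theta> i j =
     (if i + j = 0 then Re (cnj (coord \<theta> i) * cnj (coord \<theta> j)) else 0)
     + (if i = j then Re (cnj (coord \<theta> i) * coord \<theta> j) else 0)"

definition moment3 :: "(nat \<Rightarrow> real) \<Rightarrow> nat \<Rightarrow> nat \<Rightarrow> nat \<Rightarrow> real" where
  "moment3 \<theta> i j k =
     (if i + j + k = 0 then Re (cnj (coord \<theta> i) * cnj (coord \<theta> j) * cnj (coord \<theta> k)) else 0)
     + (if i + j = k then Re (cnj (coord \<theta> i) * cnj (coord \<theta> j) * coord \<theta> k) else 0)
     + (if i + k = j then Re (cnj (coord \<theta> i) * coord \<theta> j * cnj (coord \<theta> k)) else 0)
     + (if j + k = i then Re (coord \<theta> i * cnj (coord \<theta> j) * cnj (coord \<theta> k)) else 0)"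

lemma Tt_1: "Tt 1 \<theta> idx = sqrt 2 * (if idx 0 = 0 then th0 \<theta> else 0)"
proof -
  have "((\<lambda>t. Re (cnj (coord \<theta> (idx 0)) * cis (real (idx 0) * (2*pi*t)))) has_integral
      (if real (idx 0) = 0 then Re (cnj (coord \<theta> (idx 0))) else 0)) {0..<1}"
    by (intro has_integral_Re_cis_period) simp
  then have "((\<lambda>t. \<Prod>n<1. proj_rot \<theta> t (idx n)) has_integral
      sqrt 2 * (if idx 0 = 0 then th0 \<theta> else 0)) {0..<1}"
    by (auto dest: has_integral_mult_right[where c="sqrt 2"] simp: proj_rot_eq_Re_cis coord_def)
  then show ?thesis
    unfolding Tt_def by (rule integral_unique)
qed

lemma Tt_2: "Tt 2 \<theta> idx = moment2 \<theta> (idx 0) (idx 1)"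
proof -
  define i j where "i = idx 0" and "j = idx 1"
  define A B where "A = cnj (coord \<theta> i)" and "B = cnj (coord \<theta> j)"
  have "(\<Prod>n<2. proj_rot \<theta> t (idx n)) =
      Re (A * B * cis ((real i + real j) * (2*pi*t))) + Re (A * cnj B * cis ((real i - real j) * (2*pi*t)))" for t
  proof -
    have "(\<Prod>n<2. proj_rot \<theta> t (idx n)) = proj_rot \<theta> t i * proj_rot \<theta> t j"
      by (simp add: numeral_2_eq_2 i_def j_def)
    also have "\<dots> = sqrt 2 * sqrt 2 * (Re (A * cis (real i * (2*pi*t))) * Re (B * cis (real j * (2*pi*t))))"
      by (simp only: proj_rot_eq_Re_cis A_def B_def mult_ac)
    finally show ?thesis
      by (simp only: Re_mult_Re_cis distrib_right[symmetric] left_diff_distrib[symmetric])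
         (simp del: times_complex.sel)
  qed
  then have "((\<lambda>t. \<Prod>n<2. proj_rot \<theta> t (idx n)) has_integral
      (if real i + real j = 0 then Re (A * B) else 0) + (if real i - real j = 0 then Re (A * cnj B) else 0)) {0..<1}"
    by (simp only:) (intro has_integral_add has_integral_Re_cis_period; simp)
  then show ?thesis
    by (simp add: Tt_def moment2_def integral_unique i_def j_def A_def B_def)
qed

lemma Tt_3: "Tt 3 \<theta> idx = sqrt 2 / 2 * moment3 \<theta> (idx 0) (idx 1) (idx 2)"
proof -
  define i j k where "i = idx 0" and "j = idx 1" and "k = idx 2"
  define A B C where "A = cnj (coord \<theta> i)" and "B = cnj (coord \<theta> j)" and "C = cnj (coord \<theta> k)"
  have "(\<Prod>n<3. proj_rot \<theta> t (idx n)) = sqrt 2 / 2 *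
      (Re (A * B * C * cis ((real i + real j + real k) * (2*pi*t)))
       + Re (A * B * cnj C * cis ((real i + real j - real k) * (2*pi*t)))
       + Re (A * cnj B * C * cis ((real i - real j + real k) * (2*pi*t)))
       + Re (cnj A * B * C * cis ((real j + real k - real i) * (2*pi*t))))" for t
  proof -
    have "(\<Prod>n<3. proj_rot \<theta> t (idx n)) = proj_rot \<theta> t i * proj_rot \<theta> t j * proj_rot \<theta> t k"
      by (simp add: numeral_3_eq_3 numeral_2_eq_2 i_def j_def k_def)
    also have "\<dots> = sqrt 2 * sqrt 2 * sqrt 2 *
        (Re (A * cis (real i * (2*pi*t))) * Re (B * cis (real j * (2*pi*t))) * Re (C * cis (real k * (2*pi*t))))"
      by (simp only: proj_rot_eq_Re_cis A_def B_def C_def mult_ac)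
    finally show ?thesis
      by (simp only: Re_mult_Re_mult_Re_cis distrib_right[symmetric] left_diff_distrib[symmetric])
         (simp del: times_complex.sel)
  qed
  then have "((\<lambda>t. \<Prod>n<3. proj_rot \<theta> t (idx n)) has_integral sqrt 2 / 2 *
      ((if real i + real j + real k = 0 then Re (A * B * C) else 0)
       + (if real i + real j - real k = 0 then Re (A * B * cnj C) else 0)
       + (if real i - real j + real k = 0 then Re (A * cnj B * C) else 0)
       + (if real j + real k - real i = 0 then Re (cnj A * B * C) else 0))) {0..<1}"
    by (simp only:) (intro has_integral_mult_right has_integral_add has_integral_Re_cis_period; simp)
  then show ?thesis
    by (simp add: Tt_def moment3_def integral_unique i_def j_def k_def A_def B_def C_def algebra_simps)
qed

lemma rr_mult_self: "rr \<theta> l * rr \<theta> l = th1 \<theta> l * th1 \<theta> l + th2 \<theta> l * th2 \<theta> l"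
  using cmod_power2 by (simp add: rr_def power2_eq_square)

lemma coord_eq_rcis: "l \<ge> 1 \<Longrightarrow> coord \<theta> l = rcis (rr \<theta> l) (lam \<theta> l)"
  by (simp add: coord_def rr_def lam_def rcis_cmod_Arg)

lemma cnj_rcis: "cnj (rcis r a) = rcis r (- a)"
  by (simp add: rcis_def cis_cnj)

definition bispec :: "(nat \<Rightarrow> real) \<Rightarrow> nat \<Rightarrow> nat \<Rightarrow> nat \<Rightarrow> real" where
  "bispec \<theta> l l' l'' = Re (coord \<theta> l * cnj (coord \<theta> l') * cnj (coord \<theta> l''))"

lemma bispec_eq_rrr_cos:
  assumes "l \<ge> 1" "l' \<ge> 1" "l'' \<ge> 1"
  shows "bispec \<theta> l l' l'' = rrr \<theta> l l' l'' * cos (lll \<theta> l l' l'')"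
proof -
  have "coord \<theta> l * cnj (coord \<theta> l') * cnj (coord \<theta> l'') = rcis (rrr \<theta> l l' l'') (lll \<theta> l l' l'')"
    using assms by (simp add: coord_eq_rcis cnj_rcis rcis_mult rrr_def lll_def)
  then show ?thesis
    by (simp add: bispec_def)
qed

lemma moment2_values:
  "moment2 \<theta> 0 0 = 2 * (th0 \<theta>)\<^sup>2"
  "j \<ge> 1 \<Longrightarrow> moment2 \<theta> 0 j = 0"
  "i \<ge> 1 \<Longrightarrow> moment2 \<theta> i 0 = 0"
  "i \<ge> 1 \<Longrightarrow> j \<ge> 1 \<Longrightarrow> moment2 \<theta> i j = (if i = j then (rr \<theta> i)\<^sup>2 else 0)"
  by (auto simp: moment2_def coord_def rr_mult_self power2_eq_square)

lemma moment3_values: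
  "moment3 \<theta> 0 0 0 = 4 * (th0 \<theta>)^3"
  "k \<ge> 1 \<Longrightarrow> moment3 \<theta> 0 0 k = 0"
  "j \<ge> 1 \<Longrightarrow> moment3 \<theta> 0 j 0 = 0"
  "i \<ge> 1 \<Longrightarrow> moment3 \<theta> i 0 0 = 0"
  "j \<ge> 1 \<Longrightarrow> k \<ge> 1 \<Longrightarrow> moment3 \<theta> 0 j k = (if j = k then 2 * th0 \<theta> * (rr \<theta> j)\<^sup>2 else 0)"
  "i \<ge> 1 \<Longrightarrow> k \<ge> 1 \<Longrightarrow> moment3 \<theta> i 0 k = (if i = k then 2 * th0 \<theta> * (rr \<theta> i)\<^sup>2 else 0)"
  "i \<ge> 1 \<Longrightarrow> j \<ge> 1 \<Longrightarrow> moment3 \<theta> i j 0 = (if i = j then 2 * th0 \<theta> * (rr \<theta> i)\<^sup>2 else 0)"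
  "i \<ge> 1 \<Longrightarrow> j \<ge> 1 \<Longrightarrow> k \<ge> 1 \<Longrightarrow> moment3 \<theta> i j k =
      (if k = i + j then bispec \<theta> k i j else 0) + (if j = i + k then bispec \<theta> j i k else 0)
      + (if i = j + k then bispec \<theta> i j k else 0)"
  by (auto simp: moment3_def coord_def rr_mult_self bispec_def power2_eq_square power3_eq_cube algebra_simps)

lemma sum_PiE_lessThan_1:
  "(\<Sum>idx\<in>{..<1::nat} \<rightarrow>\<^sub>E S. f (idx 0)) = (\<Sum>i\<in>S. f i :: 'a::comm_monoid_add)"
  by (rule sum.reindex_bij_witness[where j="\<lambda>idx. idx 0" and i="\<lambda>i n. if n = 0 then i else undefined"])
     (auto simp: fun_eq_iff PiE_iff extensional_def)

lemma sum_PiE_lessThan_2: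
  "(\<Sum>idx\<in>{..<2::nat} \<rightarrow>\<^sub>E S. f (idx 0) (idx 1)) = (\<Sum>i\<in>S. \<Sum>j\<in>S. f i j :: 'a::comm_monoid_add)"
  unfolding sum.cartesian_product
  by (rule sum.reindex_bij_witness[where j="\<lambda>idx. (idx 0, idx 1)"
        and i="\<lambda>(i, j) n. if n = 0 then i else if n = 1 then j else undefined"])
     (auto simp: fun_eq_iff PiE_iff extensional_def)

lemma sum_PiE_lessThan_3:
  "(\<Sum>idx\<in>{..<3::nat} \<rightarrow>\<^sub>E S. f (idx 0) (idx 1) (idx 2)) =
     (\<Sum>i\<in>S. \<Sum>j\<in>S. \<Sum>k\<in>S. f i j k :: 'a::comm_monoid_add)"
  unfolding sum.cartesian_product
  by (rule sum.reindex_bij_witness[where j="\<lambda>idx. (idx 0, idx 1, idx 2)"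
        and i="\<lambda>(i, j, k) n. if n = 0 then i else if n = 1 then j else if n = 2 then k else undefined"])
     (auto simp: fun_eq_iff PiE_iff extensional_def)

lemma sum_square_atLeast0_split:
  fixes g :: "nat \<Rightarrow> nat \<Rightarrow> 'a::comm_monoid_add"
  shows "(\<Sum>i=0..L. \<Sum>j=0..L. g i j) =
    g 0 0 + (\<Sum>j=1..L. g 0 j) + (\<Sum>i=1..L. g i 0) + (\<Sum>i=1..L. \<Sum>j=1..L. g i j)"
  by (simp add: sum.atLeast_Suc_atMost sum.distrib ac_simps)

lemma sum_cube_atLeast0_split:
  fixes g :: "nat \<Rightarrow> nat \<Rightarrow> nat \<Rightarrow> 'a::comm_monoid_add"
  shows "(\<Sum>i=0..L. \<Sum>j=0..L. \<Sum>k=0..L. g i j k) = g 0 0 0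
    + (\<Sum>k=1..L. g 0 0 k) + (\<Sum>j=1..L. g 0 j 0) + (\<Sum>i=1..L. g i 0 0)
    + (\<Sum>j=1..L. \<Sum>k=1..L. g 0 j k) + (\<Sum>i=1..L. \<Sum>k=1..L. g i 0 k) + (\<Sum>i=1..L. \<Sum>j=1..L. g i j 0)
    + (\<Sum>i=1..L. \<Sum>j=1..L. \<Sum>k=1..L. g i j k)"
  by (simp add: sum.atLeast_Suc_atMost sum.distrib ac_simps)

lemma sum_sum_if_eq:
  fixes f :: "nat \<Rightarrow> 'a::comm_monoid_add"
  shows "(\<Sum>i=1..L. \<Sum>j=1..L. if i = j then f i else 0) = (\<Sum>i=1..L. f i)"
  by (simp add: sum.delta cong: sum.cong_simp)

definition resonant_triples :: "nat \<Rightarrow> (nat \<times> nat \<times> nat) set" where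
  "resonant_triples L = {(l, l', l''). l \<in> {1..L} \<and> l' \<in> {1..L} \<and> l'' \<in> {1..L} \<and> l = l' + l''}"

lemma sum_cube_if_eq_add:
  fixes f :: "nat \<Rightarrow> nat \<Rightarrow> nat \<Rightarrow> 'a::comm_monoid_add"
  shows "(\<Sum>i=1..L. \<Sum>j=1..L. \<Sum>k=1..L. if i = j + k then f i j k else 0) =
    (\<Sum>(l, l', l'')\<in>resonant_triples L. f l l' l'')"
  unfolding sum.cartesian_product
  by (rule sum.mono_neutral_cong_right) (auto simp: resonant_triples_def split: if_splits)

lemma st_1: "st L 1 \<theta> \<theta>s = (th0 \<theta> - th0 \<theta>s)\<^sup>2"
proof -
  let ?d = "\<lambda>i. (sqrt 2 * (if i = 0 then th0 \<theta> else 0) - sqrt 2 * (if i = 0 then th0 \<theta>s else 0))\<^sup>2"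
  have "st L 1 \<theta> \<theta>s = 1/2 * (\<Sum>i=0..L. ?d i)"
    unfolding st_def Tt_1 sum_PiE_lessThan_1[where f = ?d] by simp
  also have "\<dots> = (th0 \<theta> - th0 \<theta>s)\<^sup>2"
    by (simp add: sum.atLeast_Suc_atMost power_mult_distrib flip: right_diff_distrib)
  finally show ?thesis .
qed

lemma st_2:
  "st L 2 \<theta> \<theta>s = ((th0 \<theta>)\<^sup>2 - (th0 \<theta>s)\<^sup>2)\<^sup>2 + 1/4 * (\<Sum>l=1..L. ((rr \<theta> l)\<^sup>2 - (rr \<theta>s l)\<^sup>2)\<^sup>2)"
proof -
  let ?d = "\<lambda>i j. (moment2 \<theta> i j - moment2 \<theta>s i j)\<^sup>2"
  have diff_if: "((if c then a else 0) - (if c then b else 0))\<^sup>2 = (if c then (a - b)\<^sup>2 else 0)"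
    for c and a b :: real
    by simp
  have "st L 2 \<theta> \<theta>s = 1/4 * (\<Sum>i=0..L. \<Sum>j=0..L. ?d i j)"
    unfolding st_def Tt_2 sum_PiE_lessThan_2[where f = ?d] by simp
  also have "\<dots> = 1/4 * (?d 0 0 + (\<Sum>i=1..L. \<Sum>j=1..L. if i = j then ((rr \<theta> i)\<^sup>2 - (rr \<theta>s i)\<^sup>2)\<^sup>2 else 0))"
    by (simp add: sum_square_atLeast0_split moment2_values diff_if cong: sum.cong_simp)
  finally show ?thesis
    by (simp add: sum_sum_if_eq moment2_values power2_eq_square algebra_simps)
qed

lemma sum_cube_rotate:
  "(\<Sum>i\<in>A. \<Sum>j\<in>A. \<Sum>k\<in>A. h i j k) = (\<Sum>k\<in>A. \<Sum>i\<in>A. \<Sum>j\<in>A. h i j k :: 'a::comm_monoid_add)"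
proof -
  have "(\<Sum>i\<in>A. \<Sum>j\<in>A. \<Sum>k\<in>A. h i j k) = (\<Sum>i\<in>A. \<Sum>k\<in>A. \<Sum>j\<in>A. h i j k)"
    by (intro sum.cong refl sum.swap)
  also have "\<dots> = (\<Sum>k\<in>A. \<Sum>i\<in>A. \<Sum>j\<in>A. h i j k)"
    by (rule sum.swap)
  finally show ?thesis .
qed

lemma sum_moment3_sq_diff_pos:
  "(\<Sum>i=1..L. \<Sum>j=1..L. \<Sum>k=1..L. (moment3 \<theta> i j k - moment3 \<theta>s i j k)\<^sup>2) =
    3 * (\<Sum>(l, l', l'')\<in>resonant_triples L. (bispec \<theta> l l' l'' - bispec \<theta>s l l' l'')\<^sup>2)"
proof -
  define Q where "Q l l' l'' = (bispec \<theta> l l' l'' - bispec \<theta>s l l' l'')\<^sup>2" for l l' l''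
  have "(moment3 \<theta> i j k - moment3 \<theta>s i j k)\<^sup>2 =
      (if k = i + j then Q k i j else 0) + (if j = i + k then Q j i k else 0) + (if i = j + k then Q i j k else 0)"
    if "i \<ge> 1" "j \<ge> 1" "k \<ge> 1" for i j k
    \<comment> \<open>for positive indices at most one of the three resonance conditions holds\<close>
    using that by (auto simp: moment3_values Q_def)
  then have "(\<Sum>i=1..L. \<Sum>j=1..L. \<Sum>k=1..L. (moment3 \<theta> i j k - moment3 \<theta>s i j k)\<^sup>2) =
      (\<Sum>i=1..L. \<Sum>j=1..L. \<Sum>k=1..L. if k = i + j then Q k i j else 0)
      + (\<Sum>i=1..L. \<Sum>j=1..L. \<Sum>k=1..L. if j = i + k then Q j i k else 0)
      + (\<Sum>i=1..L. \<Sum>j=1..L. \<Sum>k=1..L. if i = j + k then Q i j k else 0)"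
    by (simp add: sum.distrib cong: sum.cong_simp)
  also have "(\<Sum>i=1..L. \<Sum>j=1..L. \<Sum>k=1..L. if k = i + j then Q k i j else 0) =
      (\<Sum>(l, l', l'')\<in>resonant_triples L. Q l l' l'')"
    by (subst sum_cube_rotate) (rule sum_cube_if_eq_add)
  also have "(\<Sum>i=1..L. \<Sum>j=1..L. \<Sum>k=1..L. if j = i + k then Q j i k else 0) =
      (\<Sum>(l, l', l'')\<in>resonant_triples L. Q l l' l'')"
    by (subst sum.swap) (rule sum_cube_if_eq_add)
  also have "(\<Sum>i=1..L. \<Sum>j=1..L. \<Sum>k=1..L. if i = j + k then Q i j k else 0) =
      (\<Sum>(l, l', l'')\<in>resonant_triples L. Q l l' l'')"
    by (rule sum_cube_if_eq_add)
  finally show ?thesis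
    by (simp add: Q_def)
qed

lemma sum_moment3_sq_diff:
  "(\<Sum>i=0..L. \<Sum>j=0..L. \<Sum>k=0..L. (moment3 \<theta> i j k - moment3 \<theta>s i j k)\<^sup>2) =
    16 * ((th0 \<theta>)^3 - (th0 \<theta>s)^3)\<^sup>2
    + 12 * (\<Sum>l=1..L. (th0 \<theta> * (rr \<theta> l)\<^sup>2 - th0 \<theta>s * (rr \<theta>s l)\<^sup>2)\<^sup>2)
    + 3 * (\<Sum>(l, l', l'')\<in>resonant_triples L. (bispec \<theta> l l' l'' - bispec \<theta>s l l' l'')\<^sup>2)"
proof -
  define c where "c l = (th0 \<theta> * (rr \<theta> l)\<^sup>2 - th0 \<theta>s * (rr \<theta>s l)\<^sup>2)\<^sup>2" for l
  have diag: "(moment3 \<theta> 0 j k - moment3 \<theta>s 0 j k)\<^sup>2 = (if j = k then 4 * c j else 0)"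
    "(moment3 \<theta> j 0 k - moment3 \<theta>s j 0 k)\<^sup>2 = (if j = k then 4 * c j else 0)"
    "(moment3 \<theta> j k 0 - moment3 \<theta>s j k 0)\<^sup>2 = (if j = k then 4 * c j else 0)"
    if "j \<ge> 1" "k \<ge> 1" for j k
    using that by (simp_all add: moment3_values c_def power2_eq_square algebra_simps)
  have zero: "(moment3 \<theta> 0 0 k - moment3 \<theta>s 0 0 k)\<^sup>2 = 0"
    "(moment3 \<theta> 0 k 0 - moment3 \<theta>s 0 k 0)\<^sup>2 = 0"
    "(moment3 \<theta> k 0 0 - moment3 \<theta>s k 0 0)\<^sup>2 = 0"
    if "k \<ge> 1" for k
    using that by (simp_all add: moment3_values)
  have "(\<Sum>k=1..L. (moment3 \<theta> 0 0 k - moment3 \<theta>s 0 0 k)\<^sup>2) = 0"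
    "(\<Sum>k=1..L. (moment3 \<theta> 0 k 0 - moment3 \<theta>s 0 k 0)\<^sup>2) = 0"
    "(\<Sum>k=1..L. (moment3 \<theta> k 0 0 - moment3 \<theta>s k 0 0)\<^sup>2) = 0"
    by (simp_all add: zero cong: sum.cong_simp)
  moreover have "(\<Sum>j=1..L. \<Sum>k=1..L. (moment3 \<theta> 0 j k - moment3 \<theta>s 0 j k)\<^sup>2) = 4 * sum c {1..L}"
    "(\<Sum>j=1..L. \<Sum>k=1..L. (moment3 \<theta> j 0 k - moment3 \<theta>s j 0 k)\<^sup>2) = 4 * sum c {1..L}"
    "(\<Sum>j=1..L. \<Sum>k=1..L. (moment3 \<theta> j k 0 - moment3 \<theta>s j k 0)\<^sup>2) = 4 * sum c {1..L}"
    by (simp_all add: diag sum_sum_if_eq sum_distrib_left cong: sum.cong_simp)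
  moreover have "(moment3 \<theta> 0 0 0 - moment3 \<theta>s 0 0 0)\<^sup>2 = 16 * ((th0 \<theta>)^3 - (th0 \<theta>s)^3)\<^sup>2"
    by (simp add: moment3_values power2_eq_square algebra_simps)
  ultimately show ?thesis
    unfolding sum_cube_atLeast0_split sum_moment3_sq_diff_pos c_def by simp
qed

lemma polar_terms_eq_double_sq_diff:
  fixes R Rs X Xs :: real
  shows "R\<^sup>2 + Rs\<^sup>2 - 2 * R * Rs * cos (Xs - X) + R\<^sup>2 * cos (2 * X) + Rs\<^sup>2 * cos (2 * Xs)
     - 2 * R * Rs * cos (Xs + X) = 2 * (R * cos X - Rs * cos Xs)\<^sup>2"
  unfolding cos_double_cos cos_diff cos_add by (simp add: power2_eq_square algebra_simps)

lemma st_3: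
  "st L 3 \<theta> \<theta>s = 2/3 * ((th0 \<theta>)^3 - (th0 \<theta>s)^3)\<^sup>2
    + 1/2 * (\<Sum>l=1..L. (th0 \<theta> * (rr \<theta> l)\<^sup>2 - th0 \<theta>s * (rr \<theta>s l)\<^sup>2)\<^sup>2)
    + 1/16 * (\<Sum>(l, l', l'')\<in>resonant_triples L.
        (rrr \<theta> l l' l'')\<^sup>2 + (rrr \<theta>s l l' l'')\<^sup>2
        - 2 * rrr \<theta> l l' l'' * rrr \<theta>s l l' l'' * cos (lll \<theta>s l l' l'' - lll \<theta> l l' l'')
        + (rrr \<theta> l l' l'')\<^sup>2 * cos (2 * lll \<theta> l l' l'')
        + (rrr \<theta>s l l' l'')\<^sup>2 * cos (2 * lll \<theta>s l l' l'')
        - 2 * rrr \<theta> l l' l'' * rrr \<theta>s l l' l'' * cos (lll \<theta>s l l' l'' + lll \<theta> l l' l''))"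
  (is "_ = _ + _ + 1/16 * ?polar")
proof -
  let ?d = "\<lambda>i j k. (sqrt 2 / 2 * moment3 \<theta> i j k - sqrt 2 / 2 * moment3 \<theta>s i j k)\<^sup>2"
  have "?d i j k = (sqrt 2 / 2)\<^sup>2 * (moment3 \<theta> i j k - moment3 \<theta>s i j k)\<^sup>2" for i j k
    by (simp only: right_diff_distrib[symmetric] power_mult_distrib)
  then have halve: "?d i j k = (moment3 \<theta> i j k - moment3 \<theta>s i j k)\<^sup>2 / 2" for i j k
    by (simp add: power_divide)
  have st_eq: "st L 3 \<theta> \<theta>s =
      1/24 * (\<Sum>i=0..L. \<Sum>j=0..L. \<Sum>k=0..L. (moment3 \<theta> i j k - moment3 \<theta>s i j k)\<^sup>2)"
    unfolding st_def Tt_3 halve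
    unfolding sum_PiE_lessThan_3[where f = "\<lambda>i j k. (moment3 \<theta> i j k - moment3 \<theta>s i j k)\<^sup>2 / 2"]
    by (simp add: fact_numeral sum_divide_distrib[symmetric])
  have "?polar = 2 * (\<Sum>(l, l', l'')\<in>resonant_triples L. (bispec \<theta> l l' l'' - bispec \<theta>s l l' l'')\<^sup>2)"
    unfolding sum_distrib_left
    by (intro sum.cong refl)
       (auto simp: resonant_triples_def bispec_eq_rrr_cos polar_terms_eq_double_sq_diff)
  then show ?thesis
    by (simp add: st_eq sum_moment3_sq_diff)
qed

theorem theoremC2:
  fixes L :: nat and \<theta> \<theta>s :: "nat \<Rightarrow> real"
  assumes "L \<ge> 1"
  shows "st L 1 \<theta> \<theta>s = (th0 \<theta> - th0 \<theta>s)\<^sup>2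
    \<and> st L 2 \<theta> \<theta>s = ((th0 \<theta>)\<^sup>2 - (th0 \<theta>s)\<^sup>2)\<^sup>2
           + 1/4 * (\<Sum>l=1..L. ((rr \<theta> l)\<^sup>2 - (rr \<theta>s l)\<^sup>2)\<^sup>2)
    \<and> st L 3 \<theta> \<theta>s = 2/3 * ((th0 \<theta>)^3 - (th0 \<theta>s)^3)\<^sup>2
           + 1/2 * (\<Sum>l=1..L. (th0 \<theta> * (rr \<theta> l)\<^sup>2 - th0 \<theta>s * (rr \<theta>s l)\<^sup>2)\<^sup>2)
           + 1/16 * (\<Sum>(l, l', l'') \<in> {(l, l', l''). l \<in> {1..L} \<and> l' \<in> {1..L} \<and> l'' \<in> {1..L} \<and> l = l' + l''}.
                (rrr \<theta> l l' l'')\<^sup>2 + (rrr \<theta>s l l' l'')\<^sup>2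
                - 2 * rrr \<theta> l l' l'' * rrr \<theta>s l l' l'' * cos (lll \<theta>s l l' l'' - lll \<theta> l l' l'')
                + (rrr \<theta> l l' l'')\<^sup>2 * cos (2 * lll \<theta> l l' l'')
                + (rrr \<theta>s l l' l'')\<^sup>2 * cos (2 * lll \<theta>s l l' l'')
                - 2 * rrr \<theta> l l' l'' * rrr \<theta>s l l' l'' * cos (lll \<theta>s l l' l'' + lll \<theta> l l' l''))"
  \<comment> \<open>the identities hold for every L\<close>
  using st_1 st_2 st_3 unfolding resonant_triples_def by blast

end
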